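(* Let $X$ be a Banach space as described in the context, let $f\in X$, and assume $\inf_{n\in\mathbb{N}}\|z^n\|>0$. If there exists a sequence $p_n\in\mathcal{P}_n[\mathbb{Z}]$ with $\lim_{n\to\infty}\|f-p_n\|=0$, then $f$ is a polynomial with integer coefficients.
   Context: $\mathbb{D}=\{z\in\mathbb{C}:|z|<1\}$. $X$ is a complex Banach space of functions analytic in $\mathbb{D}$ whose norm $\|\cdot\|$ satisfies: (i) $\|f(\cdot\, e^{it})\|=\|f(\cdot)\|$ for all $t\in\mathbb{R}$ and $f\in X$; (ii) $\|f\|<\infty$ for every entire function $f$; (iii) for all $f\in X$ and $g\in L[0,2\pi]$, $\big\|\frac{1}{2\pi}\int_0^{2\pi} f(ze^{it})g(t)\,dt\big\|\le \frac{1}{2\pi}\int_0^{2\pi}|g(t)|\,dt\cdot\|f\|$. $\|z^n\|$ is the norm in $X$ of $z\mapsto z^n$. A complex number is called an integer if its real and imaginary parts are integers; $\mathcal{P}_n[\mathbb{Z}]$ is the set of complex polynomials of degree at most $n-1$ with integer coefficients in this sense. *)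

theory Defs
  imports "HOL-Analysis.Analysis" "HOL-Computational_Algebra.Polynomial"
begin

definition gauss_int :: "complex \<Rightarrow> bool" where
  "gauss_int c \<longleftrightarrow> Re c \<in> \<int> \<and> Im c \<in> \<int>"

text \<open>P_n[Z]: polynomials of degree at most n-1 with Gaussian-integer coefficients
  (for n = 0 only the zero polynomial).\<close>
definition int_polys :: "nat \<Rightarrow> complex poly set" where
  "int_polys n = {q. (\<forall>i. gauss_int (coeff q i)) \<and> (q = 0 \<or> degree q < n)}"

text \<open>The standing assumptions on the space X (a set of functions, elements identified
  by their values on the unit disc) with norm N.\<close>
definition admissible_space ::
  "(complex \<Rightarrow> complex) set \<Rightarrow> ((complex \<Rightarrow> complex) \<Rightarrow> real) \<Rightarrow> bool" where
  "admissible_space X N \<longleftrightarrow>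
     \<comment> \<open>functions analytic in the disc\<close>
     (\<forall>f\<in>X. f holomorphic_on ball 0 1) \<and>
     \<comment> \<open>complex linear space\<close>
     (\<lambda>z. 0) \<in> X \<and>
     (\<forall>f\<in>X. \<forall>g\<in>X. (\<lambda>z. f z + g z) \<in> X) \<and>
     (\<forall>f\<in>X. \<forall>c. (\<lambda>z. c * f z) \<in> X) \<and>
     \<comment> \<open>norm axioms\<close>
     (\<forall>f\<in>X. N f \<ge> 0) \<and>
     (\<forall>f\<in>X. N f = 0 \<longleftrightarrow> (\<forall>z\<in>ball 0 1. f z = 0)) \<and>
     (\<forall>f\<in>X. \<forall>g\<in>X. N (\<lambda>z. f z + g z) \<le> N f + N g) \<and>
     (\<forall>f\<in>X. \<forall>c. N (\<lambda>z. c * f z) = norm c * N f) \<and>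
     \<comment> \<open>completeness\<close>
     (\<forall>s. (\<forall>n. s n \<in> X) \<longrightarrow>
        (\<forall>e>0. \<exists>M. \<forall>m\<ge>M. \<forall>n\<ge>M. N (\<lambda>z. s m z - s n z) < e) \<longrightarrow>
        (\<exists>l\<in>X. (\<lambda>n. N (\<lambda>z. s n z - l z)) \<longlonglongrightarrow> 0)) \<and>
     \<comment> \<open>(i) rotation invariance\<close>
     (\<forall>f\<in>X. \<forall>t::real. (\<lambda>z. f (z * exp (\<i> * t))) \<in> X \<and>
                        N (\<lambda>z. f (z * exp (\<i> * t))) = N f) \<and>
     \<comment> \<open>(ii) entire functions belong to X (have finite norm)\<close>
     (\<forall>f. f holomorphic_on UNIV \<longrightarrow> f \<in> X) \<and>
     \<comment> \<open>(iii) convolution inequality\<close>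
     (\<forall>f\<in>X. \<forall>g::real \<Rightarrow> complex. g absolutely_integrable_on {0..2*pi} \<longrightarrow>
        (let F = (\<lambda>z. (1 / (2*pi)) * integral {0..2*pi} (\<lambda>t. f (z * exp (\<i> * t)) * g t))
         in F \<in> X \<and>
            N F \<le> (1 / (2*pi)) * integral {0..2*pi} (\<lambda>t. norm (g t)) * N f))"

end

theory Submission
  imports Defs
begin

text \<open>The k-th Taylor coefficient of g is recovered by rotating g and integrating against
  the character e^{-ikt}. For g = q_1 - q_2 with Gaussian-integer coefficients, axiom (iii)
  therefore gives |c_k| \<parallel>z^k\<parallel> \<le> \<parallel>q_1 - q_2\<parallel>, so two such polynomials closer than
  \<delta> = inf \<parallel>z^n\<parallel> must coincide (a nonzero Gaussian integer has modulus \<ge> 1).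
  Hence the approximating sequence p_n is eventually constant, and its eventual value
  is at distance 0 from f.\<close>

lemma gauss_int_diff: "gauss_int a \<Longrightarrow> gauss_int b \<Longrightarrow> gauss_int (a - b)"
  unfolding gauss_int_def by auto

lemma gauss_int_norm_less_one_eq_0:
  assumes "gauss_int c" "norm c < 1"
  shows "c = 0"
proof -
  obtain a b :: int where "Re c = of_int a" "Im c = of_int b"
    using assms(1) unfolding gauss_int_def by (auto elim!: Ints_cases)
  moreover have "\<bar>Re c\<bar> < 1" "\<bar>Im c\<bar> < 1"
    using assms(2) abs_Re_le_cmod abs_Im_le_cmod by (meson le_less_trans)+
  ultimately have "Re c = 0" "Im c = 0" by auto
  then show ?thesis by (simp add: complex_eq_iff)
qed

lemma has_integral_exp_int_mult:
  fixes j :: int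
  shows "((\<lambda>t::real. exp (\<i> * of_int j * of_real t)) has_integral (if j = 0 then 2*pi else 0))
           {0..2*pi}"
proof (cases "j = 0")
  case True
  then show ?thesis
    using has_integral_const_real[of "1::complex" 0 "2*pi"] by (simp add: scaleR_conv_of_real)
next
  case False
  let ?F = "\<lambda>t::real. exp (\<i> * of_int j * of_real t) / (\<i> * of_int j)"
  have "((\<lambda>t::real. exp (\<i> * of_int j * of_real t)) has_integral (?F (2*pi) - ?F 0)) {0..2*pi}"
  proof (rule fundamental_theorem_of_calculus)
    fix x :: real
    have "((\<lambda>w. exp (\<i> * of_int j * w) / (\<i> * of_int j)) has_field_derivative
            exp (\<i> * of_int j * of_real x)) (at (of_real x))"
      using False by (auto intro!: derivative_eq_intros)
    then show "(?F has_vector_derivative exp (\<i> * of_int j * of_real x)) (at x within {0..2*pi})"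
      by (rule has_vector_derivative_real_field)
  qed simp
  moreover have "exp (\<i> * of_int j * of_real (2*pi)) = 1"
    using exp_2pi_1_int[of j] by (simp add: mult_ac)
  ultimately show ?thesis using False by simp
qed

lemma poly_rotation_coeff_integral:
  fixes q :: "complex poly"
  shows "(1/(2*pi)) * integral {0..2*pi}
           (\<lambda>t::real. poly q (z * exp (\<i> * t)) * exp (-(\<i> * of_nat k * of_real t)))
         = coeff q k * z ^ k"
proof -
  have expand: "poly q (z * exp (\<i> * t)) * exp (-(\<i> * of_nat k * of_real t)) =
      (\<Sum>i\<le>degree q. coeff q i * z^i * exp (\<i> * of_int (int i - int k) * of_real t))"
    for t :: real
  proof -
    have "exp (\<i> * of_real t) ^ i * exp (-(\<i> * of_nat k * of_real t)) =
          exp (\<i> * of_int (int i - int k) * of_real t)" for i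
      by (simp add: exp_of_nat_mult[symmetric] exp_add[symmetric] algebra_simps)
    then show ?thesis
      unfolding poly_altdef sum_distrib_right
      by (intro sum.cong refl) (simp add: power_mult_distrib mult_ac)
  qed
  have "((\<lambda>t::real. \<Sum>i\<le>degree q. coeff q i * z^i * exp (\<i> * of_int (int i - int k) * of_real t))
         has_integral (\<Sum>i\<le>degree q. coeff q i * z^i * (if int i - int k = 0 then 2*pi else 0)))
         {0..2*pi}"
    by (intro has_integral_sum finite_atMost has_integral_mult_right has_integral_exp_int_mult)
  moreover have "(\<Sum>i\<le>degree q. coeff q i * z^i * (if int i - int k = 0 then 2*pi else 0)) =
                 coeff q k * z^k * 2*pi"
    by (cases "k \<le> degree q") (auto simp: coeff_eq_0 if_distrib cong: if_cong)
  ultimately show ?thesis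
    by (simp add: expand integral_unique)
qed

context
  fixes X :: "(complex \<Rightarrow> complex) set" and N :: "(complex \<Rightarrow> complex) \<Rightarrow> real"
  assumes X: "admissible_space X N"
begin

lemma admissible_space_entire: "f holomorphic_on UNIV \<Longrightarrow> f \<in> X"
  using X by (simp add: admissible_space_def)

lemma admissible_space_add: "f \<in> X \<Longrightarrow> g \<in> X \<Longrightarrow> (\<lambda>z. f z + g z) \<in> X"
  using X by (simp add: admissible_space_def)

lemma admissible_space_scale: "f \<in> X \<Longrightarrow> (\<lambda>z. c * f z) \<in> X"
  using X by (simp add: admissible_space_def)

lemma admissible_norm_nonneg: "f \<in> X \<Longrightarrow> N f \<ge> 0"
  using X by (simp add: admissible_space_def)

lemma admissible_norm_eq_0_iff: "f \<in> X \<Longrightarrow> N f = 0 \<longleftrightarrow> (\<forall>z\<in>ball 0 1. f z = 0)"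
  using X by (simp add: admissible_space_def)

lemma admissible_norm_triangle: "f \<in> X \<Longrightarrow> g \<in> X \<Longrightarrow> N (\<lambda>z. f z + g z) \<le> N f + N g"
  using X by (simp add: admissible_space_def)

lemma admissible_norm_scale: "f \<in> X \<Longrightarrow> N (\<lambda>z. c * f z) = norm c * N f"
  using X by (simp add: admissible_space_def)

lemma admissible_norm_convolution:
  fixes f :: "complex \<Rightarrow> complex" and g :: "real \<Rightarrow> complex"
  assumes "f \<in> X" "g absolutely_integrable_on {0..2*pi}"
  shows "N (\<lambda>z. (1 / (2*pi)) * integral {0..2*pi} (\<lambda>t. f (z * exp (\<i> * t)) * g t))
           \<le> (1 / (2*pi)) * integral {0..2*pi} (\<lambda>t. norm (g t)) * N f"
  using X assms unfolding admissible_space_def Let_def by blast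

lemma admissible_space_diff:
  assumes "f \<in> X" "g \<in> X"
  shows "(\<lambda>z. f z - g z) \<in> X"
  using admissible_space_add[OF assms(1) admissible_space_scale[OF assms(2), of "-1"]] by simp

lemma admissible_norm_triangle_diff:
  assumes "f \<in> X" "g \<in> X" "h \<in> X"
  shows "N (\<lambda>z. g z - h z) \<le> N (\<lambda>z. f z - g z) + N (\<lambda>z. f z - h z)"
proof -
  have fg: "(\<lambda>z. f z - g z) \<in> X" and fh: "(\<lambda>z. f z - h z) \<in> X"
    using assms by (auto intro: admissible_space_diff)
  have "N (\<lambda>z. g z - f z) = N (\<lambda>z. f z - g z)"
    using admissible_norm_scale[OF fg, of "-1"] by simp
  moreover have "N (\<lambda>z. g z - h z) \<le> N (\<lambda>z. g z - f z) + N (\<lambda>z. f z - h z)"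
    using admissible_norm_triangle[OF admissible_space_diff[OF assms(2,1)] fh] by simp
  ultimately show ?thesis by simp
qed

lemma admissible_poly_in_space: "(\<lambda>z. poly q z) \<in> X"
  by (rule admissible_space_entire) (auto intro!: holomorphic_intros)

lemma admissible_space_power: "(\<lambda>z. z ^ k) \<in> X"
  by (rule admissible_space_entire) (auto intro!: holomorphic_intros)

lemma admissible_norm_coeff_le:
  "norm (coeff q k) * N (\<lambda>z. z ^ k) \<le> N (\<lambda>z. poly q z)"
proof -
  define g where "g = (\<lambda>t::real. exp (-(\<i> * of_nat k * of_real t)))"
  have "g absolutely_integrable_on {0..2*pi}"
    unfolding g_def by (intro absolutely_integrable_continuous_real continuous_intros)
  from admissible_norm_convolution[OF admissible_poly_in_space this]
  have "N (\<lambda>z. (1 / (2*pi)) * integral {0..2*pi} (\<lambda>t. poly q (z * exp (\<i> * t)) * g t))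
          \<le> (1 / (2*pi)) * integral {0..2*pi} (\<lambda>t. norm (g t)) * N (\<lambda>z. poly q z)" .
  also have "(\<lambda>z. (1 / (2*pi)) * integral {0..2*pi} (\<lambda>t. poly q (z * exp (\<i> * t)) * g t))
             = (\<lambda>z. coeff q k * z ^ k)"
    unfolding g_def by (rule ext, rule poly_rotation_coeff_integral)
  also have "(\<lambda>t. norm (g t)) = (\<lambda>t. 1)"
    unfolding g_def by (simp add: norm_exp_eq_Re)
  finally have "N (\<lambda>z. coeff q k * z ^ k) \<le> N (\<lambda>z. poly q z)"
    by simp
  then show ?thesis
    by (simp add: admissible_norm_scale[OF admissible_space_power])
qed

lemma admissible_gauss_poly_eq_0:
  assumes "\<And>i. gauss_int (coeff q i)"
    and "\<And>k. \<delta> \<le> N (\<lambda>z. z ^ k)"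
    and "N (\<lambda>z. poly q z) < \<delta>"
  shows "q = 0"
proof -
  have "coeff q k = 0" for k
  proof (rule gauss_int_norm_less_one_eq_0)
    have "norm (coeff q k) * \<delta> \<le> norm (coeff q k) * N (\<lambda>z. z ^ k)"
      by (intro mult_left_mono assms(2)) auto
    also have "\<dots> < \<delta>"
      using admissible_norm_coeff_le assms(3) by (rule le_less_trans)
    finally have "norm (coeff q k) * \<delta> < \<delta>" .
    moreover have "\<delta> > 0"
      using assms(3) admissible_norm_nonneg[OF admissible_poly_in_space, of q] by linarith
    ultimately show "norm (coeff q k) < 1"
      by (simp add: mult_less_cancel_right2)
  qed (fact assms(1))
  then show ?thesis by (simp add: poly_eq_iff)
qed

lemma admissible_norm_power_ge_INF: "(INF n. N (\<lambda>z. z ^ n)) \<le> N (\<lambda>z. z ^ k)"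
  by (intro cINF_lower bdd_belowI[where m=0])
    (auto intro: admissible_norm_nonneg[OF admissible_space_power])

lemma admissible_gauss_poly_approx_eventually_const:
  fixes p :: "nat \<Rightarrow> complex poly"
  assumes "f \<in> X"
    and "\<And>k. \<delta> \<le> N (\<lambda>z. z ^ k)" "\<delta> > 0"
    and "\<And>n i. gauss_int (coeff (p n) i)"
    and "(\<lambda>n. N (\<lambda>z. f z - poly (p n) z)) \<longlonglongrightarrow> 0"
  obtains n0 where "\<And>n. n \<ge> n0 \<Longrightarrow> p n = p n0"
proof -
  define err where "err n = N (\<lambda>z. f z - poly (p n) z)" for n
  have "0 < \<delta> / 2"
    using assms(3) by simp
  from order_tendstoD(2)[OF assms(5) this]
  have "eventually (\<lambda>n. err n < \<delta> / 2) sequentially"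
    unfolding err_def .
  then obtain n0 where n0: "\<And>n. n \<ge> n0 \<Longrightarrow> err n < \<delta> / 2"
    unfolding eventually_sequentially by blast
  have "p n = p n0" if "n \<ge> n0" for n
  proof -
    have "N (\<lambda>z. poly (p n - p n0) z) \<le> err n + err n0"
      using admissible_norm_triangle_diff[OF assms(1) admissible_poly_in_space admissible_poly_in_space]
      by (simp add: err_def)
    also have "\<dots> < \<delta>"
      using n0[OF that] n0[of n0] by simp
    finally have "N (\<lambda>z. poly (p n - p n0) z) < \<delta>" .
    moreover have "gauss_int (coeff (p n - p n0) i)" for i
      unfolding coeff_diff by (rule gauss_int_diff[OF assms(4) assms(4)])
    ultimately have "p n - p n0 = 0"
      by (rule admissible_gauss_poly_eq_0[OF _ assms(2), rotated])
    then show ?thesis by simp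
  qed
  then show ?thesis by (rule that)
qed

end

theorem theorem5p1:
  fixes X :: "(complex \<Rightarrow> complex) set" and N :: "(complex \<Rightarrow> complex) \<Rightarrow> real"
    and f :: "complex \<Rightarrow> complex" and p :: "nat \<Rightarrow> complex poly"
  assumes "admissible_space X N"
    and "f \<in> X"
    and "(INF n::nat. N (\<lambda>z. z ^ n)) > 0"
    and "\<forall>n. p n \<in> int_polys n"
    and "(\<lambda>n. N (\<lambda>z. f z - poly (p n) z)) \<longlonglongrightarrow> 0"
  shows "\<exists>q. (\<forall>i. gauss_int (coeff q i)) \<and> (\<forall>z\<in>ball 0 1. f z = poly q z)"
proof -
  note X = assms(1)
  have gauss: "gauss_int (coeff (p n) i)" for n i
    using assms(4) unfolding int_polys_def by blast
  obtain n0 where const: "\<And>n. n \<ge> n0 \<Longrightarrow> p n = p n0"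
    using admissible_gauss_poly_approx_eventually_const[OF X assms(2)
        admissible_norm_power_ge_INF[OF X] assms(3) gauss assms(5)] by blast
  have "eventually (\<lambda>n. N (\<lambda>z. f z - poly (p n) z) = N (\<lambda>z. f z - poly (p n0) z)) sequentially"
    unfolding eventually_sequentially using const by (intro exI[of _ n0]) (metis (no_types))
  then have "(\<lambda>n. N (\<lambda>z. f z - poly (p n) z)) \<longlonglongrightarrow> N (\<lambda>z. f z - poly (p n0) z)"
    by (rule tendsto_eventually)
  then have "N (\<lambda>z. f z - poly (p n0) z) = 0"
    using assms(5) by (rule LIMSEQ_unique)
  then have "\<forall>z\<in>ball 0 1. f z = poly (p n0) z"
    using admissible_norm_eq_0_iff[OF X admissible_space_diff[OF X assms(2) admissible_poly_in_space[OF X]]]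
    by simp
  then show ?thesis
    using gauss by blast
qed

end
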